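(* Let $\mathcal{O}$ be an oriented matroid of rank $r$ on $E$, $f\in E$, $I=[e_1,\dots,e_k]$ ($k\le r$) an ordered set of independent elements (possibly $f\in I$), and $\mathcal{O}'=\mathcal{O}\cup p=\mathcal{O}[e_1^+,\dots,e_k^+]$. Let $X,Y$ be conformal cocircuits of $\mathcal{O}'$ with $X_p=Y_p\neq 0$ and $X\circ Y$ an edge of $\mathcal{O}'$, and suppose both $X$ and $Y$ have index $i$ with respect to $I$, where $1\le i\le k$ and $f\ne e_i$ (so $X_{e_i}=Y_{e_i}\ne0$). If $X_f\neq Y_f$, or $X_f=Y_f=0$, or $\mathrm{Dir}_{(\mathcal{O}',e_i,f)}(X,Y)\neq 0$, then $\mathrm{Dir}_{(\mathcal{O}',e_i,f)}(X,Y)=\mathrm{Dir}_{(\mathcal{O}',p,f)}(X,Y)$, and, whenever $X_f=Y_f\neq 0$, also $\mathrm{Dir}_{(\mathcal{O}',f,e_i)}(X,Y)=\mathrm{Dir}_{(\mathcal{O}',f,p)}(X,Y)$.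
   Context: Oriented matroid $\mathcal{O}$ of rank $r$ on finite $E$, given by its cocircuits (sign vectors in $\{+,-,0\}^E$). Notation: $z(X)$ zero set, $\operatorname{sep}(X,Y)=\{e:X_e=-Y_e\ne0\}$, $(X\circ Y)_e=X_e$ if $X_e\ne0$, else $Y_e$; conformal means $\operatorname{sep}=\emptyset$. An edge is a covector whose zero set is a flat of rank $r-2$; cocircuits $X\ne\pm Y$ are comodular if $X\circ Y$ is an edge. For comodular $X,Y$ and $e\in\operatorname{sep}(X,Y)$, cocircuit elimination of $e$ between $X$ and $Y$ yields the unique cocircuit $Z$ with $Z_e=0$ and $Z_h=(X\circ Y)_h$ for $h\notin\operatorname{sep}(X,Y)$. For an oriented matroid $\mathcal{Q}$ on ground set $E'$, distinct $a,b\in E'$ and comodular cocircuits $X,Y$ of $\mathcal{Q}$ with $X_a=Y_a\ne0$, let $Z$ be obtained by eliminating $a$ between $-X$ and $Y$ and set $\mathrm{Dir}_{(\mathcal{Q},a,b)}(X,Y)=Z_b$; if $X_a\ne0$ and $Y_a=0$ set $\mathrm{Dir}_{(\mathcal{Q},a,b)}(X,Y)=Y_b$, and if $X_a=0$, $Y_a\neq 0$ set it to $-X_b$. The index of a cocircuit $Y$ w.r.t. $I=[e_1,\dots,e_k]$ is the smallest $i$ with $Y_{e_i}\ne0$, or $k+1$ if none. The positive lexicographic extension $\mathcal{O}[e_1^+,\dots,e_k^+]=\mathcal{O}\cup p$ is the single-element extension with localization $\sigma(Y)=Y_{e_i}$ if the index $i$ of $Y$ is $\le k$, and $\sigma(Y)=0$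 otherwise. *)

theory Defs
  imports Main
begin

text \<open>Sign vectors on a ground set E are functions into {-1,0,1} that vanish outside E.
  An oriented matroid is given by its set of cocircuits.\<close>

definition sign_vector :: "'a set \<Rightarrow> ('a \<Rightarrow> int) \<Rightarrow> bool" where
  "sign_vector E X \<longleftrightarrow> (\<forall>e. X e \<in> {-1, 0, 1}) \<and> (\<forall>e. e \<notin> E \<longrightarrow> X e = 0)"

definition zerovec :: "'a \<Rightarrow> int" where
  "zerovec = (\<lambda>e. 0)"

definition neg :: "('a \<Rightarrow> int) \<Rightarrow> 'a \<Rightarrow> int" where
  "neg X = (\<lambda>e. - X e)"

definition supp :: "'a set \<Rightarrow> ('a \<Rightarrow> int) \<Rightarrow> 'a set" where
  "supp E X = {e \<in> E. X e \<noteq> 0}"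

definition zset :: "'a set \<Rightarrow> ('a \<Rightarrow> int) \<Rightarrow> 'a set" where
  "zset E X = {e \<in> E. X e = 0}"

definition sep :: "'a set \<Rightarrow> ('a \<Rightarrow> int) \<Rightarrow> ('a \<Rightarrow> int) \<Rightarrow> 'a set" where
  "sep E X Y = {e \<in> E. X e = - Y e \<and> X e \<noteq> 0}"

definition comp :: "('a \<Rightarrow> int) \<Rightarrow> ('a \<Rightarrow> int) \<Rightarrow> 'a \<Rightarrow> int" where
  "comp X Y = (\<lambda>e. if X e \<noteq> 0 then X e else Y e)"

definition conformal :: "'a set \<Rightarrow> ('a \<Rightarrow> int) \<Rightarrow> ('a \<Rightarrow> int) \<Rightarrow> bool" where
  "conformal E X Y \<longleftrightarrow> sep E X Y = {}"

definition is_OM :: "'a set \<Rightarrow> ('a \<Rightarrow> int) set \<Rightarrow> bool" where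
  "is_OM E C \<longleftrightarrow> finite E
     \<and> (\<forall>X\<in>C. sign_vector E X)
     \<and> zerovec \<notin> C
     \<and> (\<forall>X\<in>C. neg X \<in> C)
     \<and> (\<forall>X\<in>C. \<forall>Y\<in>C. supp E X \<subseteq> supp E Y \<longrightarrow> X = Y \<or> X = neg Y)
     \<and> (\<forall>X\<in>C. \<forall>Y\<in>C. \<forall>e. X \<noteq> neg Y \<and> e \<in> sep E X Y \<longrightarrow>
          (\<exists>Z\<in>C. Z e = 0 \<and> (\<forall>g. Z g > 0 \<longrightarrow> X g > 0 \<or> Y g > 0)
                          \<and> (\<forall>g. Z g < 0 \<longrightarrow> X g < 0 \<or> Y g < 0)))"

text \<open>Underlying matroid: hyperplanes are zero sets of cocircuits; the closure of A is the
  intersection of all hyperplanes containing A (E if there is none).\<close>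
definition om_cl :: "'a set \<Rightarrow> ('a \<Rightarrow> int) set \<Rightarrow> 'a set \<Rightarrow> 'a set" where
  "om_cl E C A = {e \<in> E. \<forall>X\<in>C. A \<subseteq> zset E X \<longrightarrow> e \<in> zset E X}"

definition om_indep :: "'a set \<Rightarrow> ('a \<Rightarrow> int) set \<Rightarrow> 'a set \<Rightarrow> bool" where
  "om_indep E C A \<longleftrightarrow> A \<subseteq> E \<and> (\<forall>a\<in>A. a \<notin> om_cl E C (A - {a}))"

definition om_rank_of :: "'a set \<Rightarrow> ('a \<Rightarrow> int) set \<Rightarrow> 'a set \<Rightarrow> nat" where
  "om_rank_of E C A = Max {card B | B. B \<subseteq> A \<and> om_indep E C B}"

definition om_rank :: "'a set \<Rightarrow> ('a \<Rightarrow> int) set \<Rightarrow> nat" where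
  "om_rank E C = om_rank_of E C E"

inductive_set covectors :: "('a \<Rightarrow> int) set \<Rightarrow> ('a \<Rightarrow> int) set" for C where
  zero: "zerovec \<in> covectors C"
| step: "X \<in> C \<Longrightarrow> V \<in> covectors C \<Longrightarrow> comp X V \<in> covectors C"

definition is_edge :: "'a set \<Rightarrow> ('a \<Rightarrow> int) set \<Rightarrow> ('a \<Rightarrow> int) \<Rightarrow> bool" where
  "is_edge E C V \<longleftrightarrow> V \<in> covectors C
      \<and> int (om_rank_of E C (zset E V)) = int (om_rank E C) - 2"

text \<open>Cocircuit elimination of e between comodular X and Y: the unique cocircuit Z with
  Z_e = 0 and Z_h = (X \<circ> Y)_h for h not in sep(X,Y).\<close>
definition elim :: "'a set \<Rightarrow> ('a \<Rightarrow> int) set \<Rightarrow> ('a \<Rightarrow> int) \<Rightarrow> ('a \<Rightarrow> int) \<Rightarrow> 'a \<Rightarrow> 'a \<Rightarrow> int" where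
  "elim E C X Y e = (THE Z. Z \<in> C \<and> Z e = 0 \<and> (\<forall>h\<in>E. h \<notin> sep E X Y \<longrightarrow> Z h = comp X Y h))"

text \<open>Dir_{(Q,a,b)}(X,Y); the value 0 in the remaining (undefined) cases is a dummy.\<close>
definition Dir :: "'a set \<Rightarrow> ('a \<Rightarrow> int) set \<Rightarrow> 'a \<Rightarrow> 'a \<Rightarrow> ('a \<Rightarrow> int) \<Rightarrow> ('a \<Rightarrow> int) \<Rightarrow> int" where
  "Dir E C a b X Y =
     (if X a = Y a \<and> X a \<noteq> 0 then elim E C (neg X) Y a b
      else if X a \<noteq> 0 \<and> Y a = 0 then Y b
      else if X a = 0 \<and> Y a \<noteq> 0 then - X b
      else 0)"

text \<open>Index of Y w.r.t. I = [e_1,...,e_k], 0-based: smallest i < k with Y (I!i) \<noteq> 0,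
  or k = length I if none.\<close>
definition cocirc_index :: "'a list \<Rightarrow> ('a \<Rightarrow> int) \<Rightarrow> nat" where
  "cocirc_index I Y = (if \<exists>i<length I. Y (I ! i) \<noteq> 0
       then (LEAST i. i < length I \<and> Y (I ! i) \<noteq> 0) else length I)"

definition lex_sigma :: "'a list \<Rightarrow> ('a \<Rightarrow> int) \<Rightarrow> int" where
  "lex_sigma I Y = (if cocirc_index I Y < length I then Y (I ! cocirc_index I Y) else 0)"

definition restr_del :: "'a \<Rightarrow> ('a \<Rightarrow> int) \<Rightarrow> 'a \<Rightarrow> int" where
  "restr_del p Y = Y(p := 0)"

definition deletion :: "('a \<Rightarrow> int) set \<Rightarrow> 'a \<Rightarrow> ('a \<Rightarrow> int) set" where
  "deletion C p = {restr_del p Y | Y. Y \<in> C \<and> restr_del p Y \<noteq> zerovec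
      \<and> (\<forall>Y'\<in>C. restr_del p Y' \<noteq> zerovec \<longrightarrow>
            \<not> ({e. restr_del p Y' e \<noteq> 0} \<subset> {e. restr_del p Y e \<noteq> 0}))}"

definition single_ext :: "'a set \<Rightarrow> ('a \<Rightarrow> int) set \<Rightarrow> (('a \<Rightarrow> int) \<Rightarrow> int) \<Rightarrow> 'a
    \<Rightarrow> ('a \<Rightarrow> int) set \<Rightarrow> bool" where
  "single_ext E C \<sigma> p C' \<longleftrightarrow> p \<notin> E \<and> is_OM (insert p E) C' \<and> deletion C' p = C
      \<and> (\<forall>Y\<in>C. Y(p := \<sigma> Y) \<in> C')"

definition lex_ext :: "'a set \<Rightarrow> ('a \<Rightarrow> int) set \<Rightarrow> 'a list \<Rightarrow> 'a \<Rightarrow> ('a \<Rightarrow> int) set \<Rightarrow> bool" where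
  "lex_ext E C I p C' \<longleftrightarrow> single_ext E C (lex_sigma I) p C'"

end

theory Submission
  imports Defs
begin

(* For g in sep(-X,Y) let Z_g be the elimination of g between -X and Y.  All Z_g vanish on
   the flat z(X o Y) of rank r - 2, so a cocircuit vanishing there is determined up to sign
   by one further zero; this makes Z_g unique and gives the antisymmetry
   Z_g(h) X_h = - Z_h(g) X_g, proved by eliminating g once more between -X (or Y) and Z_h.
   If f is not in sep(-X,Y), both Dir values at f equal (-X o Y)_f.  Otherwise the
   lexicographic extension forces X_p = X_{e_i} and Z_f(p) = Z_f(e_i), and, because a
   cocircuit of O' with p-entry 0 and index at most k lifts to one with nonzero p-entry,
   also Z_p(f) <> 0; antisymmetry applied to (e_i,f) and (p,f) then identifies
   Z_p(f) with Z_{e_i}(f). *)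

section \<open>Cocircuit elimination\<close>

lemma neg_apply [simp]: "neg W e = - W e"
  by (simp add: neg_def)

lemma neg_neg [simp]: "neg (neg W) = W"
  by (simp add: neg_def)

locale oriented_matroid =
  fixes E :: "'a set" and C :: "('a \<Rightarrow> int) set"
  assumes is_OM: "is_OM E C"
begin

lemma finite_ground: "finite E"
  using is_OM by (simp add: is_OM_def)

lemma cocircuit_sign_vector: "W \<in> C \<Longrightarrow> sign_vector E W"
  using is_OM by (simp add: is_OM_def)

lemma cocircuit_sign: "W \<in> C \<Longrightarrow> W e \<in> {-1, 0, 1}"
  using cocircuit_sign_vector by (simp add: sign_vector_def)

lemma cocircuit_outside: "W \<in> C \<Longrightarrow> e \<notin> E \<Longrightarrow> W e = 0"
  using cocircuit_sign_vector by (simp add: sign_vector_def)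

lemma neg_cocircuit: "W \<in> C \<Longrightarrow> neg W \<in> C"
  using is_OM by (simp add: is_OM_def)

lemma cocircuit_nonzero:
  assumes "W \<in> C"
  obtains e where "e \<in> E" "W e \<noteq> 0"
proof -
  have "zerovec \<notin> C"
    using is_OM by (simp add: is_OM_def)
  then have "W \<noteq> zerovec"
    using assms by blast
  then obtain e where "W e \<noteq> 0"
    by (auto simp: zerovec_def fun_eq_iff)
  moreover have "e \<in> E"
    using calculation cocircuit_outside[OF assms] by blast
  ultimately show ?thesis
    using that by blast
qed

lemma finite_support:
  assumes "W \<in> C"
  shows "finite {e. W e \<noteq> 0}"
proof (rule finite_subset[OF _ finite_ground])
  show "{e. W e \<noteq> 0} \<subseteq> E"
    using cocircuit_outside[OF assms] by blast
qed

lemma support_subset_imp_eq: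
  assumes "W1 \<in> C" "W2 \<in> C" "\<And>e. W1 e \<noteq> 0 \<Longrightarrow> W2 e \<noteq> 0"
  shows "W1 = W2 \<or> W1 = neg W2"
proof -
  have "supp E W1 \<subseteq> supp E W2"
    using assms(3) by (auto simp: supp_def)
  moreover have "\<forall>X\<in>C. \<forall>Y\<in>C. supp E X \<subseteq> supp E Y \<longrightarrow> X = Y \<or> X = neg Y"
    using is_OM unfolding is_OM_def by (elim conjE)
  ultimately show ?thesis
    using assms(1,2) by simp
qed

lemma elimination:
  assumes "W1 \<in> C" "W2 \<in> C" "W1 \<noteq> neg W2" "W1 e = - W2 e" "W1 e \<noteq> 0"
  obtains Z where "Z \<in> C" "Z e = 0" "\<forall>g. Z g \<noteq> 0 \<longrightarrow> Z g = W1 g \<or> Z g = W2 g"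
proof -
  have "e \<in> E"
    using assms(5) cocircuit_outside[OF assms(1)] by blast
  then have "e \<in> sep E W1 W2"
    using assms(4,5) by (simp add: sep_def)
  then obtain Z where Z: "Z \<in> C" "Z e = 0"
      "\<forall>g. Z g > 0 \<longrightarrow> W1 g > 0 \<or> W2 g > 0" "\<forall>g. Z g < 0 \<longrightarrow> W1 g < 0 \<or> W2 g < 0"
  proof -
    have "\<forall>X\<in>C. \<forall>Y\<in>C. \<forall>e. X \<noteq> neg Y \<and> e \<in> sep E X Y \<longrightarrow>
        (\<exists>Z\<in>C. Z e = 0 \<and> (\<forall>g. Z g > 0 \<longrightarrow> X g > 0 \<or> Y g > 0)
                        \<and> (\<forall>g. Z g < 0 \<longrightarrow> X g < 0 \<or> Y g < 0))"
      using is_OM unfolding is_OM_def by (elim conjE)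
    then show ?thesis
      using that conjI[OF assms(3) \<open>e \<in> sep E W1 W2\<close>] assms(1,2) by blast
  qed
  have "Z g = W1 g \<or> Z g = W2 g" if "Z g \<noteq> 0" for g
  proof -
    have "Z g = 1 \<or> Z g = -1" "W1 g \<in> {-1, 0, 1}" "W2 g \<in> {-1, 0, 1}"
      using that cocircuit_sign[OF Z(1), of g] cocircuit_sign[OF assms(1), of g]
        cocircuit_sign[OF assms(2), of g] by auto
    then show ?thesis
      using Z(3)[rule_format, of g] Z(4)[rule_format, of g] by auto
  qed
  then show ?thesis
    using that Z(1,2) by blast
qed

lemma elimination_common:
  assumes "W1 \<in> C" "W2 \<in> C" "W1 \<noteq> W2" "W1 \<noteq> neg W2" "W1 x \<noteq> 0" "W2 x \<noteq> 0"
  obtains Z where "Z \<in> C" "Z x = 0" "\<And>g. Z g \<noteq> 0 \<Longrightarrow> W1 g \<noteq> 0 \<or> W2 g \<noteq> 0"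
proof -
  obtain W where W: "W \<in> C" "W = W2 \<or> W = neg W2" "W1 x = - W x"
  proof (cases "W1 x = - W2 x")
    case False
    then have "W1 x = - neg W2 x"
      using assms(5,6) cocircuit_sign[OF assms(1), of x] cocircuit_sign[OF assms(2), of x]
      by auto
    then show ?thesis
      using that neg_cocircuit[OF assms(2)] by blast
  qed (use that assms(2) in blast)
  have "W1 \<noteq> neg W"
    using W(2) assms(3,4) by auto
  then obtain Z where Z: "Z \<in> C" "Z x = 0" "\<forall>g. Z g \<noteq> 0 \<longrightarrow> Z g = W1 g \<or> Z g = W g"
    using W(3) assms(5) by (rule elimination[OF assms(1) W(1)])
  have "W1 g \<noteq> 0 \<or> W2 g \<noteq> 0" if "Z g \<noteq> 0" for g
    using Z(3)[rule_format, OF that] W(2) that by auto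
  then show ?thesis
    using that Z(1,2) by blast
qed

text \<open>Induction on the size of the union of the supports; the two recursive calls
  shrink it by removing b and an element outside the support of W1, respectively.\<close>

lemma elimination_retaining:
  assumes "W1 \<in> C" "W2 \<in> C" "W1 x \<noteq> 0" "W2 x \<noteq> 0" "W1 b \<noteq> 0" "W2 b = 0"
  shows "\<exists>Z\<in>C. Z x = 0 \<and> Z b \<noteq> 0 \<and> (\<forall>e. Z e \<noteq> 0 \<longrightarrow> W1 e \<noteq> 0 \<or> W2 e \<noteq> 0)"
  using assms
proof (induction "card ({e. W1 e \<noteq> 0} \<union> {e. W2 e \<noteq> 0})" arbitrary: W1 W2 x b
    rule: less_induct)
  case less
  let ?U = "{e. W1 e \<noteq> 0} \<union> {e. W2 e \<noteq> 0}"
  have fin: "finite ?U"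
    using finite_support less.prems(1,2) by blast
  have "W1 \<noteq> W2" "W1 \<noteq> neg W2"
    using less.prems(5,6) by auto
  then obtain Z3 where Z3: "Z3 \<in> C" "Z3 x = 0" "\<And>g. Z3 g \<noteq> 0 \<Longrightarrow> W1 g \<noteq> 0 \<or> W2 g \<noteq> 0"
    using elimination_common less.prems(1-4) by metis
  show ?case
  proof (cases "Z3 b = 0")
    case False
    then show ?thesis
      using Z3 by blast
  next
    case True
    obtain g where g: "Z3 g \<noteq> 0" "W1 g = 0"
    proof (rule ccontr)
      assume "\<not> thesis"
      then have "Z3 = W1 \<or> Z3 = neg W1"
        using support_subset_imp_eq[OF Z3(1) less.prems(1)] that by blast
      then show False
        using Z3(2) less.prems(3) by auto
    qed
    have "W2 g \<noteq> 0"
      using g Z3(3) by blast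
    have "{e. W2 e \<noteq> 0} \<union> {e. Z3 e \<noteq> 0} \<subset> ?U"
      using Z3(3) less.prems(5,6) True by auto
    then have "card ({e. W2 e \<noteq> 0} \<union> {e. Z3 e \<noteq> 0}) < card ?U"
      using fin by (rule psubset_card_mono[rotated])
    then obtain Z4 where Z4: "Z4 \<in> C" "Z4 g = 0" "Z4 x \<noteq> 0"
        "\<forall>e. Z4 e \<noteq> 0 \<longrightarrow> W2 e \<noteq> 0 \<or> Z3 e \<noteq> 0"
      using less.hyps[OF _ less.prems(2) Z3(1) \<open>W2 g \<noteq> 0\<close> g(1) less.prems(4) Z3(2)] by blast
    have "{e. W1 e \<noteq> 0} \<union> {e. Z4 e \<noteq> 0} \<subset> ?U"
      using Z4(2,4) Z3(3) g \<open>W2 g \<noteq> 0\<close> by auto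
    then have "card ({e. W1 e \<noteq> 0} \<union> {e. Z4 e \<noteq> 0}) < card ?U"
      using fin by (rule psubset_card_mono[rotated])
    moreover have "Z4 b = 0"
      using Z4(4) less.prems(6) True by blast
    ultimately obtain Z5 where "Z5 \<in> C" "Z5 x = 0" "Z5 b \<noteq> 0"
        "\<forall>e. Z5 e \<noteq> 0 \<longrightarrow> W1 e \<noteq> 0 \<or> Z4 e \<noteq> 0"
      using less.hyps[OF _ less.prems(1) Z4(1) less.prems(3) Z4(3) less.prems(5)] by blast
    then show ?thesis
      using Z4(4) Z3(3) by (metis (mono_tags))
  qed
qed

end

section \<open>Closure, independence and rank\<close>

lemma notin_om_clI:
  "W \<in> C \<Longrightarrow> A \<subseteq> E \<Longrightarrow> \<forall>b\<in>A. W b = 0 \<Longrightarrow> W x \<noteq> 0 \<Longrightarrow> x \<notin> om_cl E C A"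
  unfolding om_cl_def zset_def by blast

lemma notin_om_clD:
  assumes "x \<in> E" "A \<subseteq> E" "x \<notin> om_cl E C A"
  obtains W where "W \<in> C" "\<forall>b\<in>A. W b = 0" "W x \<noteq> 0"
proof -
  have "\<exists>W\<in>C. (\<forall>b\<in>A. W b = 0) \<and> W x \<noteq> 0"
    using assms unfolding om_cl_def zset_def by blast
  then show thesis
    using that by blast
qed

lemma subset_om_cl: "A \<subseteq> E \<Longrightarrow> A \<subseteq> om_cl E C A"
  by (auto simp: om_cl_def)

lemma om_cl_mono: "A \<subseteq> B \<Longrightarrow> om_cl E C A \<subseteq> om_cl E C B"
  by (auto simp: om_cl_def)

lemma om_cl_subset_om_cl: "D \<subseteq> om_cl E C A \<Longrightarrow> om_cl E C D \<subseteq> om_cl E C A"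
  unfolding om_cl_def by blast

lemma om_indep_subset: "om_indep E C A \<Longrightarrow> B \<subseteq> A \<Longrightarrow> om_indep E C B"
  unfolding om_indep_def using om_cl_mono[of "B - {_}" "A - {_}" E C] by blast

lemma finite_om_indep_cards:
  assumes "finite S"
  shows "finite {card B | B. B \<subseteq> S \<and> om_indep E C B}"
proof (rule finite_subset)
  show "{card B | B. B \<subseteq> S \<and> om_indep E C B} \<subseteq> card ` Pow S"
    by blast
  show "finite (card ` Pow S)"
    using assms by simp
qed

lemma card_le_om_rank_of:
  "finite S \<Longrightarrow> A \<subseteq> S \<Longrightarrow> om_indep E C A \<Longrightarrow> card A \<le> om_rank_of E C S"
  unfolding om_rank_of_def by (rule Max_ge[OF finite_om_indep_cards]) auto

lemma om_basis_exists:
  assumes "finite S"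
  obtains B where "B \<subseteq> S" "om_indep E C B" "card B = om_rank_of E C S"
proof -
  let ?cards = "{card B | B. B \<subseteq> S \<and> om_indep E C B}"
  have "om_indep E C {}"
    by (simp add: om_indep_def)
  then have "card {} \<in> ?cards"
    by (intro CollectI exI[of _ "{}"]) simp
  have "Max ?cards \<in> ?cards"
  proof (rule Max_in[OF finite_om_indep_cards[OF assms]])
    show "?cards \<noteq> {}"
      using \<open>card {} \<in> ?cards\<close> by (rule ex_in_conv[THEN iffD1, OF exI])
  qed
  then have "\<exists>B. om_rank_of E C S = card B \<and> B \<subseteq> S \<and> om_indep E C B"
    by (simp only: mem_Collect_eq om_rank_of_def)
  then obtain B where B: "om_rank_of E C S = card B" "B \<subseteq> S" "om_indep E C B"
    by blast
  show thesis
    using B(2,3) B(1)[symmetric] by (rule that)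
qed

context oriented_matroid
begin

lemma om_indep_insert:
  assumes B: "om_indep E C B" and W: "W \<in> C" "\<forall>b\<in>B. W b = 0" and x: "x \<in> E" "W x \<noteq> 0"
  shows "om_indep E C (insert x B)" "x \<notin> B"
proof -
  have BE: "B \<subseteq> E"
    using B by (simp add: om_indep_def)
  show "x \<notin> B"
    using W x by blast
  have "a \<notin> om_cl E C (insert x B - {a})" if "a \<in> insert x B" for a
  proof (cases "a = x")
    case True
    then have "insert x B - {a} = B"
      using \<open>x \<notin> B\<close> by auto
    then show ?thesis
      using notin_om_clI[OF W(1) BE W(2) x(2)] True by simp
  next
    case False
    then have a: "a \<in> B" "insert x B - {a} = insert x (B - {a})"
      using that by auto
    have "a \<in> E" "B - {a} \<subseteq> E"
      using BE a(1) by auto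
    moreover have "a \<notin> om_cl E C (B - {a})"
      using B a(1) by (simp add: om_indep_def)
    ultimately obtain W1 where W1: "W1 \<in> C" "\<forall>b\<in>B - {a}. W1 b = 0" "W1 a \<noteq> 0"
      by (rule notin_om_clD)
    obtain Z where Z: "Z \<in> C" "\<forall>b\<in>insert x (B - {a}). Z b = 0" "Z a \<noteq> 0"
    proof (cases "W1 x = 0")
      case True
      show ?thesis
        by (rule that[of W1]) (use True W1 in auto)
    next
      case False
      have "W a = 0"
        using W(2) a(1) by blast
      then obtain Z where Z: "Z \<in> C" "Z x = 0" "Z a \<noteq> 0"
          "\<forall>e. Z e \<noteq> 0 \<longrightarrow> W1 e \<noteq> 0 \<or> W e \<noteq> 0"
        using elimination_retaining[OF W1(1) W(1) False x(2) W1(3)] by blast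
      have "\<forall>b\<in>insert x (B - {a}). Z b = 0"
        using Z(2,4) W1(2) W(2) by blast
      then show ?thesis
        using Z(1,3) by (intro that[of Z])
    qed
    have "insert x (B - {a}) \<subseteq> E"
      using BE x(1) by blast
    then show ?thesis
      using notin_om_clI[OF Z(1) _ Z(2) Z(3)] a(2) by simp
  qed
  then show "om_indep E C (insert x B)"
    using BE x(1) by (simp add: om_indep_def)
qed

lemma om_basis_spans:
  assumes "finite S" "B \<subseteq> S" "om_indep E C B" "card B = om_rank_of E C S" "S \<subseteq> E"
  shows "S \<subseteq> om_cl E C B"
proof
  fix y assume "y \<in> S"
  show "y \<in> om_cl E C B"
  proof (rule ccontr)
    have "y \<in> E" "B \<subseteq> E"
      using \<open>y \<in> S\<close> assms(2,5) by auto
    moreover assume "y \<notin> om_cl E C B"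
    ultimately obtain W where "W \<in> C" "\<forall>b\<in>B. W b = 0" "W y \<noteq> 0"
      by (rule notin_om_clD)
    note By = om_indep_insert[OF assms(3) this(1,2) \<open>y \<in> E\<close> this(3)]
    have "card (insert y B) \<le> om_rank_of E C S"
    proof (rule card_le_om_rank_of[OF assms(1) _ By(1)])
      show "insert y B \<subseteq> S"
        using \<open>y \<in> S\<close> assms(2) by (rule insert_subsetI)
    qed
    moreover have "finite B"
      using assms(1,2) by (rule finite_subset[rotated])
    ultimately show False
      using By(2) assms(4) by simp
  qed
qed

lemma card_om_indep_le_card_spanning:
  assumes D: "finite D" "D \<subseteq> E" and A: "om_indep E C A" "A \<subseteq> om_cl E C D"
  shows "card A \<le> card D"
  using A
proof (induction "card (A - D)" arbitrary: A)
  case 0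
  have "finite A"
    using "0.prems"(1) finite_subset[OF _ finite_ground] by (simp add: om_indep_def)
  then have "A \<subseteq> D"
    using "0.hyps" by simp
  then show ?case
    using D(1) by (rule card_mono[rotated])
next
  case (Suc n)
  have AE: "A \<subseteq> E"
    using Suc.prems(1) by (simp add: om_indep_def)
  then have fin: "finite A"
    using finite_subset[OF _ finite_ground] by blast
  have "A - D \<noteq> {}"
    using Suc.hyps(2) by force
  then obtain a where a: "a \<in> A" "a \<notin> D"
    by blast
  have a_cl: "a \<notin> om_cl E C (A - {a})"
    using Suc.prems(1) a(1) by (simp add: om_indep_def)
  have "\<not> D \<subseteq> om_cl E C (A - {a})"
  proof
    assume "D \<subseteq> om_cl E C (A - {a})"
    then have "om_cl E C D \<subseteq> om_cl E C (A - {a})"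
      by (rule om_cl_subset_om_cl)
    then show False
      using Suc.prems(2) a(1) a_cl by blast
  qed
  then obtain c where c: "c \<in> D" "c \<notin> om_cl E C (A - {a})"
    by blast
  have "c \<in> E" "A - {a} \<subseteq> E"
    using c(1) D(2) AE by auto
  then obtain W where W: "W \<in> C" "\<forall>b\<in>A - {a}. W b = 0" "W c \<noteq> 0"
    using c(2) by (rule notin_om_clD)
  have "om_indep E C (A - {a})"
    using Suc.prems(1) Diff_subset by (rule om_indep_subset)
  note A' = om_indep_insert[OF this W(1,2) \<open>c \<in> E\<close> W(3)]
  have "insert c (A - {a}) - D = (A - D) - {a}"
    using c(1) by blast
  then have "card (insert c (A - {a}) - D) = n"
    using Suc.hyps(2) a fin by simp
  moreover have "insert c (A - {a}) \<subseteq> om_cl E C D"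
    using Suc.prems(2) c(1) subset_om_cl[OF D(2), of C] by blast
  ultimately have "card (insert c (A - {a})) \<le> card D"
    using Suc.hyps(1) A'(1) by blast
  moreover have "card (insert c (A - {a})) = Suc (card (A - {a}))"
    using A'(2) fin by simp
  moreover have "Suc (card (A - {a})) = card A"
    using fin a(1) by (rule card_Suc_Diff1)
  ultimately show ?case
    by simp
qed

end

section \<open>Eliminations in a comodular pair\<close>

locale comodular_pair = oriented_matroid +
  fixes X Y :: "'a \<Rightarrow> int"
  assumes X_cocircuit: "X \<in> C" and Y_cocircuit: "Y \<in> C"
    and conformal: "conformal E X Y"
    and edge_rank: "om_rank_of E C (zset E (comp X Y)) + 2 = om_rank E C"
begin

lemma zset_comp_iff: "e \<in> zset E (comp X Y) \<longleftrightarrow> e \<in> E \<and> X e = 0 \<and> Y e = 0"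
  by (auto simp: zset_def comp_def)

lemma conformal_eq:
  assumes "X e \<noteq> 0" "Y e \<noteq> 0"
  shows "X e = Y e"
proof -
  have "e \<in> E"
    using assms(1) cocircuit_outside[OF X_cocircuit] by blast
  then have "\<not> (X e = - Y e \<and> X e \<noteq> 0)"
    using conformal unfolding conformal_def sep_def by blast
  then show ?thesis
    using assms cocircuit_sign[OF X_cocircuit, of e] cocircuit_sign[OF Y_cocircuit, of e] by auto
qed

text \<open>Otherwise a basis of z(X \<circ> Y), which has r - 2 elements, extends by g, a point of
  the support of W1 outside that of W2, and a point of the support of W2 to an independent
  set of r + 1 elements.\<close>

lemma cocircuit_through_edge_unique:
  assumes g: "g \<in> E" "X g \<noteq> 0 \<or> Y g \<noteq> 0"
    and W1: "W1 \<in> C" "\<forall>e\<in>insert g (zset E (comp X Y)). W1 e = 0"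
    and W2: "W2 \<in> C" "\<forall>e\<in>insert g (zset E (comp X Y)). W2 e = 0"
  shows "W1 = W2 \<or> W1 = neg W2"
proof (rule ccontr)
  assume "\<not> (W1 = W2 \<or> W1 = neg W2)"
  then obtain g2 where g2: "W1 g2 \<noteq> 0" "W2 g2 = 0"
    using support_subset_imp_eq[OF W1(1) W2(1)] by blast
  have "g2 \<in> E"
    using g2(1) cocircuit_outside[OF W1(1)] by blast
  obtain g3 where g3: "g3 \<in> E" "W2 g3 \<noteq> 0"
    using cocircuit_nonzero[OF W2(1)] .
  let ?F = "zset E (comp X Y)"
  have "finite ?F"
    using finite_subset[OF _ finite_ground] by (simp add: zset_def)
  then obtain B where B: "B \<subseteq> ?F" "om_indep E C B" "card B = om_rank_of E C ?F"
    by (rule om_basis_exists)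
  have "finite B"
    using B(1) \<open>finite ?F\<close> by (rule finite_subset)
  obtain T where T: "T \<in> C" "T g \<noteq> 0" "\<forall>b\<in>B. T b = 0"
  proof -
    have "\<forall>b\<in>B. X b = 0 \<and> Y b = 0"
      using B(1) zset_comp_iff by blast
    then show thesis
      using g(2) that X_cocircuit Y_cocircuit by metis
  qed
  note B1 = om_indep_insert[OF B(2) T(1,3) g(1) T(2)]
  have "\<forall>b\<in>insert g B. W1 b = 0"
    using W1(2) B(1) by blast
  note B2 = om_indep_insert[OF B1(1) W1(1) this \<open>g2 \<in> E\<close> g2(1)]
  have "\<forall>b\<in>insert g2 (insert g B). W2 b = 0"
    using W2(2) B(1) g2(2) by blast
  note B3 = om_indep_insert[OF B2(1) W2(1) this g3]
  have "card (insert g3 (insert g2 (insert g B))) = card B + 3"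
    using B1(2) B2(2) B3(2) \<open>finite B\<close> by simp
  moreover have "card (insert g3 (insert g2 (insert g B))) \<le> om_rank E C"
    unfolding om_rank_def
    using finite_ground _ B3(1) by (rule card_le_om_rank_of) (use B3(1) in \<open>simp add: om_indep_def\<close>)
  ultimately show False
    using B(3) edge_rank by linarith
qed

lemma X_ne_Y: "X \<noteq> Y"
proof
  assume "X = Y"
  let ?F = "zset E X"
  have F: "zset E (comp X Y) = ?F"
    using \<open>X = Y\<close> by (simp add: comp_def)
  have "?F \<subseteq> E"
    by (auto simp: zset_def)
  then have "finite ?F"
    using finite_ground by (rule finite_subset)
  then obtain B where B: "B \<subseteq> ?F" "om_indep E C B" "card B = om_rank_of E C ?F"
    by (rule om_basis_exists)
  have F_cl: "?F \<subseteq> om_cl E C B"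
    using \<open>finite ?F\<close> B \<open>?F \<subseteq> E\<close> by (rule om_basis_spans)
  obtain x where x: "x \<in> E" "X x \<noteq> 0"
    using cocircuit_nonzero[OF X_cocircuit] .
  have no_cocircuit: "\<not> insert x B \<subseteq> zset E W" if "W \<in> C" for W
  proof
    assume xB: "insert x B \<subseteq> zset E W"
    then have "om_cl E C B \<subseteq> zset E W"
      using \<open>W \<in> C\<close> unfolding om_cl_def by blast
    then have "?F \<subseteq> zset E W"
      using F_cl by (rule order_trans[rotated])
    then have "X e \<noteq> 0" if "W e \<noteq> 0" for e
      using that cocircuit_outside[OF \<open>W \<in> C\<close>, of e] unfolding zset_def by blast
    then have "W = X \<or> W = neg X"
      by (rule support_subset_imp_eq[OF \<open>W \<in> C\<close> X_cocircuit])
    moreover have "W x = 0"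
      using xB by (simp add: zset_def)
    ultimately show False
      using x(2) by auto
  qed
  have "finite B" "B \<subseteq> E"
    using B(1) \<open>finite ?F\<close> \<open>?F \<subseteq> E\<close> by (auto intro: finite_subset)
  have span: "E \<subseteq> om_cl E C (insert x B)"
    unfolding om_cl_def using no_cocircuit by blast
  obtain A where A: "A \<subseteq> E" "om_indep E C A" "card A = om_rank E C"
    unfolding om_rank_def using finite_ground by (rule om_basis_exists)
  have "card A \<le> card (insert x B)"
  proof (rule card_om_indep_le_card_spanning)
    show "finite (insert x B)" "insert x B \<subseteq> E"
      using \<open>finite B\<close> \<open>B \<subseteq> E\<close> x(1) by auto
    show "A \<subseteq> om_cl E C (insert x B)"
      using A(1) span by (rule order_trans)
  qed (rule A(2))
  also have "\<dots> \<le> card B + 1"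
    using \<open>finite B\<close> by (simp add: card_insert_le_m1)
  finally show False
    using A(3) B(3) edge_rank F by simp
qed

lemma X_ne_neg_Y: "X \<noteq> neg Y"
proof
  assume "X = neg Y"
  obtain e where "e \<in> E" "X e \<noteq> 0"
    using cocircuit_nonzero[OF X_cocircuit] .
  then have "e \<in> sep E X Y"
    using \<open>X = neg Y\<close> by (simp add: sep_def)
  then show False
    using conformal by (simp add: conformal_def)
qed

lemma exclusive_element_exists:
  obtains k where "k \<in> E" "(X k = 0) \<noteq> (Y k = 0)"
proof -
  have "\<not> (\<forall>e. X e \<noteq> 0 \<longrightarrow> Y e \<noteq> 0)"
    using support_subset_imp_eq[OF X_cocircuit Y_cocircuit] X_ne_Y X_ne_neg_Y by blast
  then obtain k where "X k \<noteq> 0" "Y k = 0"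
    by blast
  moreover have "k \<in> E"
    using calculation(1) cocircuit_outside[OF X_cocircuit] by blast
  ultimately show thesis
    using that by simp
qed

definition is_elim :: "'a \<Rightarrow> ('a \<Rightarrow> int) \<Rightarrow> bool" where
  "is_elim g Z \<longleftrightarrow> Z \<in> C \<and> Z g = 0 \<and> (\<forall>h\<in>E. h \<notin> sep E (neg X) Y \<longrightarrow> Z h = comp (neg X) Y h)"

lemma sep_neg_iff: "h \<in> sep E (neg X) Y \<longleftrightarrow> h \<in> E \<and> X h = Y h \<and> X h \<noteq> 0"
  by (auto simp: sep_def)

lemma is_elim_cocircuit: "is_elim g Z \<Longrightarrow> Z \<in> C"
  by (simp add: is_elim_def)

lemma is_elim_zero_at: "is_elim g Z \<Longrightarrow> Z g = 0"
  by (simp add: is_elim_def)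

lemma is_elim_move: "is_elim g Z \<Longrightarrow> Z g' = 0 \<Longrightarrow> is_elim g' Z"
  by (simp add: is_elim_def)

lemma is_elim_outside_sep:
  assumes "is_elim g Z" "\<not> (X h = Y h \<and> X h \<noteq> 0)"
  shows "Z h = comp (neg X) Y h"
proof (cases "h \<in> E")
  case True
  then show ?thesis
    using assms unfolding is_elim_def sep_neg_iff by blast
next
  case False
  then show ?thesis
    using cocircuit_outside[OF is_elim_cocircuit[OF assms(1)]]
      cocircuit_outside[OF X_cocircuit] cocircuit_outside[OF Y_cocircuit]
    by (simp add: comp_def)
qed

lemma is_elim_zero:
  assumes "is_elim g Z" "X e = 0" "Y e = 0"
  shows "Z e = 0"
  using is_elim_outside_sep[OF assms(1)] assms(2,3) by (simp add: comp_def)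

lemma is_elim_vanishes_on_edge:
  "is_elim g Z \<Longrightarrow> \<forall>e\<in>insert g (zset E (comp X Y)). Z e = 0"
  using is_elim_zero is_elim_zero_at zset_comp_iff by blast

lemma is_elim_exists:
  assumes g: "g \<in> E" "X g = Y g" "X g \<noteq> 0"
  obtains Z where "is_elim g Z"
proof -
  have "neg X \<noteq> neg Y"
    using X_ne_Y by (metis neg_neg)
  moreover have "neg X g = - Y g" "neg X g \<noteq> 0"
    using g(2,3) by simp_all
  ultimately obtain Z where Z: "Z \<in> C" "Z g = 0" "\<forall>h. Z h \<noteq> 0 \<longrightarrow> Z h = neg X h \<or> Z h = Y h"
    by (rule elimination[OF neg_cocircuit[OF X_cocircuit] Y_cocircuit])
  have Z_edge: "\<forall>e\<in>zset E (comp X Y). Z e = 0"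
  proof
    fix e assume "e \<in> zset E (comp X Y)"
    then show "Z e = 0"
      using Z(3)[rule_format, of e] by (auto simp: zset_comp_iff)
  qed
  have "Z h = comp (neg X) Y h" if h: "h \<in> E" "\<not> (X h = Y h \<and> X h \<noteq> 0)" for h
  proof (cases "X h = 0 \<and> Y h = 0")
    case True
    then show ?thesis
      using Z(3)[rule_format, of h] by (auto simp: comp_def)
  next
    case False
    then have "X h = 0 \<or> Y h = 0"
      using h(2) conformal_eq by blast
    then obtain T where T: "T \<in> C" "T g \<noteq> 0" "\<forall>e\<in>insert h (zset E (comp X Y)). T e = 0"
    proof
      assume "X h = 0"
      show thesis
        by (rule that[OF X_cocircuit]) (use g(3) \<open>X h = 0\<close> in \<open>auto simp: zset_comp_iff\<close>)
    next
      assume "Y h = 0"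
      show thesis
        by (rule that[OF Y_cocircuit]) (use g(2,3) \<open>Y h = 0\<close> in \<open>auto simp: zset_comp_iff\<close>)
    qed
    have "Z h \<noteq> 0"
    proof
      assume "Z h = 0"
      then have "Z = T \<or> Z = neg T"
        using cocircuit_through_edge_unique[OF h(1) _ Z(1) _ T(1,3)] False Z_edge
        by blast
      then show False
        using Z(2) T(2) by auto
    qed
    then show ?thesis
      using Z(3)[rule_format, of h] \<open>X h = 0 \<or> Y h = 0\<close> by (auto simp: comp_def)
  qed
  then have "is_elim g Z"
    unfolding is_elim_def sep_neg_iff using Z(1,2) by blast
  then show thesis
    by (rule that)
qed

lemma is_elim_unique:
  assumes "g \<in> E" "X g \<noteq> 0" "is_elim g Z1" "is_elim g Z2"
  shows "Z1 = Z2"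
proof -
  have "Z1 = Z2 \<or> Z1 = neg Z2"
    using cocircuit_through_edge_unique[OF assms(1) _ is_elim_cocircuit[OF assms(3)] _
        is_elim_cocircuit[OF assms(4)]] assms(2)
      is_elim_vanishes_on_edge[OF assms(3)] is_elim_vanishes_on_edge[OF assms(4)]
    by blast
  moreover obtain k where k: "k \<in> E" "(X k = 0) \<noteq> (Y k = 0)"
    by (rule exclusive_element_exists)
  then have "Z1 k = comp (neg X) Y k" "Z2 k = comp (neg X) Y k" "comp (neg X) Y k \<noteq> 0"
    using is_elim_outside_sep[OF assms(3)] is_elim_outside_sep[OF assms(4)]
    by (auto simp: comp_def)
  ultimately show ?thesis
    by auto
qed

lemma elim_eq_is_elim:
  assumes "g \<in> E" "X g \<noteq> 0" "is_elim g Z"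
  shows "elim E C (neg X) Y g = Z"
  unfolding elim_def
proof (rule the_equality)
  show "Z \<in> C \<and> Z g = 0 \<and> (\<forall>h\<in>E. h \<notin> sep E (neg X) Y \<longrightarrow> Z h = comp (neg X) Y h)"
    using assms(3) by (simp add: is_elim_def)
next
  fix Z' assume "Z' \<in> C \<and> Z' g = 0 \<and> (\<forall>h\<in>E. h \<notin> sep E (neg X) Y \<longrightarrow> Z' h = comp (neg X) Y h)"
  then have "is_elim g Z'"
    by (simp add: is_elim_def)
  then show "Z' = Z"
    using is_elim_unique[OF assms(1,2) _ assms(3)] by blast
qed

lemma Dir_eq_is_elim:
  assumes "g \<in> E" "X g = Y g" "X g \<noteq> 0" "is_elim g Z"
  shows "Dir E C g b X Y = Z b"
  using elim_eq_is_elim[OF assms(1,3,4)] assms(2,3) by (simp add: Dir_def)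

lemma neg_X_or_Y_at_exclusive:
  assumes "T = neg X \<or> T = Y" "(X k = 0) \<noteq> (Y k = 0)"
  shows "T k = 0 \<or> T k = comp (neg X) Y k"
  using assms by (auto simp: comp_def)

lemma is_elim_not_both_opposite:
  assumes g: "g \<in> E" "X g = Y g" "X g \<noteq> 0" and h: "X h = Y h" "X h \<noteq> 0"
    and Zg: "is_elim g Zg" and Zh: "is_elim h Zh"
    and T: "T = neg X \<or> T = Y" and opp: "Zg h = - T h" "Zh g = - T g"
  shows False
proof -
  have T_C: "T \<in> C"
    using T X_cocircuit Y_cocircuit neg_cocircuit by blast
  have "T g \<noteq> 0" "T h \<noteq> 0"
    using T g(2,3) h by auto
  have "T \<noteq> neg Zh"
    using \<open>T h \<noteq> 0\<close> is_elim_zero_at[OF Zh] by auto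
  moreover have "T g = - Zh g" "T g \<noteq> 0"
    using opp(2) \<open>T g \<noteq> 0\<close> by simp_all
  ultimately obtain W where W: "W \<in> C" "W g = 0" "\<forall>e. W e \<noteq> 0 \<longrightarrow> W e = T e \<or> W e = Zh e"
    by (rule elimination[OF T_C is_elim_cocircuit[OF Zh]])
  have "\<forall>e\<in>insert g (zset E (comp X Y)). W e = 0"
  proof
    fix e assume e: "e \<in> insert g (zset E (comp X Y))"
    show "W e = 0"
    proof (cases "e = g")
      case False
      then have "T e = 0" "Zh e = 0"
        using e T is_elim_zero[OF Zh] by (auto simp: zset_comp_iff)
      then show ?thesis
        using W(3)[rule_format, of e] by (cases "W e = 0") auto
    qed (use W(2) in simp)
  qed
  then have "W = Zg \<or> W = neg Zg"
    using cocircuit_through_edge_unique[OF g(1) _ W(1) _ is_elim_cocircuit[OF Zg]] g(3)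
      is_elim_vanishes_on_edge[OF Zg] by blast
  moreover have "W \<noteq> Zg"
  proof
    assume "W = Zg"
    then have "W h = - T h"
      using opp(1) by simp
    then show False
      using W(3)[rule_format, of h] is_elim_zero_at[OF Zh] \<open>T h \<noteq> 0\<close> by auto
  qed
  ultimately have W_neg: "W = neg Zg"
    by blast
  obtain k where k: "k \<in> E" "(X k = 0) \<noteq> (Y k = 0)"
    by (rule exclusive_element_exists)
  then have "Zg k = comp (neg X) Y k" "Zh k = comp (neg X) Y k" "comp (neg X) Y k \<noteq> 0"
    using is_elim_outside_sep[OF Zg] is_elim_outside_sep[OF Zh] by (auto simp: comp_def)
  then show False
    using W(3)[rule_format, of k] W_neg neg_X_or_Y_at_exclusive[OF T k(2)] by auto
qed

lemma is_elim_antisym: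
  assumes g: "g \<in> E" "X g = Y g" "X g \<noteq> 0" and h: "h \<in> E" "X h = Y h" "X h \<noteq> 0"
    and Zg: "is_elim g Zg" and Zh: "is_elim h Zh" and nz: "Zg h \<noteq> 0" "Zh g \<noteq> 0"
  shows "Zg h * X h = - (Zh g * X g)"
proof -
  have "\<not> (Zg h = X h \<and> Zh g = X g)"
    using is_elim_not_both_opposite[OF g h(2,3) Zg Zh, of "neg X"] by auto
  moreover have "\<not> (Zg h = - X h \<and> Zh g = - X g)"
    using is_elim_not_both_opposite[OF g h(2,3) Zg Zh, of Y] g(2) h(2) by auto
  moreover have "Zg h \<in> {-1, 1}" "Zh g \<in> {-1, 1}" "X g \<in> {-1, 1}" "X h \<in> {-1, 1}"
    using nz g(3) h(3) cocircuit_sign[OF is_elim_cocircuit[OF Zg], of h]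
      cocircuit_sign[OF is_elim_cocircuit[OF Zh], of g]
      cocircuit_sign[OF X_cocircuit, of g] cocircuit_sign[OF X_cocircuit, of h] by auto
  ultimately show ?thesis
    by auto
qed

lemma is_elim_transfer:
  assumes a: "a \<in> E" "X a = Y a" "X a \<noteq> 0" and p: "p \<in> E" "X p = Y p" "X p \<noteq> 0"
    and f: "f \<in> E" "X f = Y f" "X f \<noteq> 0" and X_p: "X p = X a"
    and Za: "is_elim a Za" and Zp: "is_elim p Zp" and Zf: "is_elim f Zf" and Za_f: "Za f \<noteq> 0"
    and Zf_p: "Zf a \<noteq> 0 \<Longrightarrow> Zf p \<noteq> 0 \<Longrightarrow> Zf p = Zf a"
    and Zp_f: "Zp a \<noteq> 0 \<Longrightarrow> Zp f \<noteq> 0"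
  shows "Zp f = Za f \<and> Zf a = Zf p"
proof -
  have "Zf a \<noteq> 0"
  proof
    assume "Zf a = 0"
    then have "Zf = Za"
      using is_elim_unique[OF a(1,3) is_elim_move[OF Zf] Za] by blast
    then show False
      using Za_f is_elim_zero_at[OF Zf] by simp
  qed
  have "Zf p \<noteq> 0"
  proof
    assume "Zf p = 0"
    then have "Zf = Zp"
      using is_elim_unique[OF p(1,3) is_elim_move[OF Zf] Zp] by blast
    then show False
      using Zp_f \<open>Zf a \<noteq> 0\<close> is_elim_zero_at[OF Zf] by simp
  qed
  have "Zp f \<noteq> 0"
  proof
    assume "Zp f = 0"
    then have "Zp = Zf"
      using is_elim_unique[OF f(1,3) is_elim_move[OF Zp] Zf] by blast
    then show False
      using \<open>Zf p \<noteq> 0\<close> is_elim_zero_at[OF Zp] by simp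
  qed
  have "Zf p = Zf a"
    using Zf_p \<open>Zf a \<noteq> 0\<close> \<open>Zf p \<noteq> 0\<close> .
  have "Zp f * X f = - (Zf p * X p)"
    using is_elim_antisym[OF p f Zp Zf \<open>Zp f \<noteq> 0\<close> \<open>Zf p \<noteq> 0\<close>] .
  also have "\<dots> = - (Zf a * X a)"
    using \<open>Zf p = Zf a\<close> X_p by simp
  also have "\<dots> = Za f * X f"
    using is_elim_antisym[OF a f Za Zf Za_f \<open>Zf a \<noteq> 0\<close>] by simp
  finally have "Zp f = Za f"
    using f(3) by simp
  then show ?thesis
    using \<open>Zf p = Zf a\<close> by simp
qed

end

section \<open>Lexicographic extensions\<close>

lemma cocirc_index_eqI:
  assumes "i < length I" "\<And>j. j < i \<Longrightarrow> V (I ! j) = 0" "V (I ! i) \<noteq> 0"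
  shows "cocirc_index I V = i"
proof -
  have "(LEAST j. j < length I \<and> V (I ! j) \<noteq> 0) = i"
  proof (rule Least_equality)
    show "i < length I \<and> V (I ! i) \<noteq> 0"
      using assms(1,3) ..
  next
    fix j assume "j < length I \<and> V (I ! j) \<noteq> 0"
    then show "i \<le> j"
      using assms(2) not_le by blast
  qed
  then show ?thesis
    using assms(1,3) by (auto simp: cocirc_index_def)
qed

lemma nth_cocirc_index_nonzero:
  assumes "cocirc_index I V < length I"
  shows "V (I ! cocirc_index I V) \<noteq> 0"
proof -
  have ex: "\<exists>i<length I. V (I ! i) \<noteq> 0"
    using assms by (auto simp: cocirc_index_def split: if_splits)
  then have "cocirc_index I V = (LEAST i. i < length I \<and> V (I ! i) \<noteq> 0)"
    by (simp add: cocirc_index_def)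
  also have "V (I ! \<dots>) \<noteq> 0"
    using LeastI_ex[OF ex[unfolded Bex_def]] by blast
  finally show ?thesis .
qed

lemma nth_below_cocirc_index:
  assumes "j < cocirc_index I V"
  shows "V (I ! j) = 0"
proof (cases "\<exists>i<length I. V (I ! i) \<noteq> 0")
  case True
  then obtain i where i: "i < length I" "V (I ! i) \<noteq> 0"
    by blast
  have "j < (LEAST i. i < length I \<and> V (I ! i) \<noteq> 0)"
    using assms True by (simp add: cocirc_index_def)
  moreover have "(LEAST i. i < length I \<and> V (I ! i) \<noteq> 0) \<le> i"
    using i by (simp add: Least_le)
  ultimately show ?thesis
    using not_less_Least i(1) by fastforce
next
  case False
  then have "cocirc_index I V = length I"
    unfolding cocirc_index_def by (rule if_not_P)
  then show ?thesis
    using False assms by simp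
qed

lemma cocirc_index_neg [simp]: "cocirc_index I (neg V) = cocirc_index I V"
  by (simp only: cocirc_index_def neg_apply neg_equal_0_iff_equal)

lemma lex_sigma_neg [simp]: "lex_sigma I (neg V) = - lex_sigma I V"
  by (simp add: lex_sigma_def)

lemma cocirc_index_fun_upd:
  assumes "p \<notin> set I"
  shows "cocirc_index I (V(p := c)) = cocirc_index I V"
proof -
  have "(V(p := c)) (I ! i) = V (I ! i)" if "i < length I" for i
    using assms nth_mem[OF that] by auto
  then show ?thesis
    unfolding cocirc_index_def by (simp cong: conj_cong)
qed

lemma (in oriented_matroid) deletion_cocircuit_below:
  assumes "W \<in> C" "W(p := 0) \<noteq> zerovec"
  obtains V where "V \<in> deletion C p" "V p = 0" "\<forall>e. V e \<noteq> 0 \<longrightarrow> W e \<noteq> 0"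
proof -
  let ?s = "\<lambda>W. {e. restr_del p W e \<noteq> 0}"
  let ?P = "\<lambda>W'. W' \<in> C \<and> restr_del p W' \<noteq> zerovec \<and> ?s W' \<subseteq> ?s W"
  have "?P W"
    using assms by (simp add: restr_del_def)
  then obtain W' where W': "?P W'" "\<forall>W''. ?P W'' \<longrightarrow> card (?s W') \<le> card (?s W'')"
    using ex_has_least_nat[of ?P W "\<lambda>W'. card (?s W')"] by blast
  have "finite (?s W)"
    using finite_support[OF assms(1)] by (rule finite_subset[rotated]) (auto simp: restr_del_def)
  have "restr_del p W' \<in> deletion C p"
    unfolding deletion_def
  proof (intro CollectI exI conjI ballI impI)
    show "restr_del p W' = restr_del p W'" "W' \<in> C" "restr_del p W' \<noteq> zerovec"
      using W'(1) by simp_all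
  next
    fix Y' assume Y': "Y' \<in> C" "restr_del p Y' \<noteq> zerovec"
    show "\<not> ?s Y' \<subset> ?s W'"
    proof
      assume "?s Y' \<subset> ?s W'"
      moreover have "finite (?s W')"
        using W'(1) \<open>finite (?s W)\<close> by (blast intro: finite_subset)
      ultimately have "card (?s Y') < card (?s W')"
        by (rule psubset_card_mono[rotated])
      moreover have "?P Y'"
        using Y' W'(1) \<open>?s Y' \<subset> ?s W'\<close> by blast
      ultimately show False
        using W'(2) not_le by blast
    qed
  qed
  moreover have "restr_del p W' p = 0"
    by (simp add: restr_del_def)
  moreover have "\<forall>e. restr_del p W' e \<noteq> 0 \<longrightarrow> W e \<noteq> 0"
  proof (intro allI impI)
    fix e assume "restr_del p W' e \<noteq> 0"
    then have "e \<in> ?s W"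
      using W'(1) by blast
    then show "W e \<noteq> 0"
      by (auto simp: restr_del_def split: if_splits)
  qed
  ultimately show thesis
    by (rule that)
qed

locale lex_extension =
  fixes E :: "'a set" and Om :: "('a \<Rightarrow> int) set" and I :: "'a list" and p :: 'a
    and C :: "('a \<Rightarrow> int) set"
  assumes lex_ext: "lex_ext E Om I p C" and set_I: "set I \<subseteq> E"

lemma lex_ext_is_OM: "lex_ext E Om I p C \<Longrightarrow> is_OM (insert p E) C"
  by (simp add: lex_ext_def single_ext_def)

sublocale lex_extension \<subseteq> oriented_matroid "insert p E" C
  using lex_ext by (unfold_locales) (rule lex_ext_is_OM)

context lex_extension
begin

lemma p_notin_E: "p \<notin> E"
  using lex_ext by (simp add: lex_ext_def single_ext_def)

lemma p_notin_I: "p \<notin> set I"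
  using p_notin_E set_I by blast

lemma deletion_p: "deletion C p = Om"
  using lex_ext by (simp add: lex_ext_def single_ext_def)

lemma lex_cocircuit: "V \<in> Om \<Longrightarrow> V(p := lex_sigma I V) \<in> C"
  using lex_ext by (simp add: lex_ext_def single_ext_def)

lemma fun_upd_p_ne_zerovec:
  assumes "cocirc_index I W < length I"
  shows "W(p := 0) \<noteq> zerovec"
proof
  assume "W(p := 0) = zerovec"
  then have "(W(p := 0)) (I ! cocirc_index I W) = 0"
    by (simp add: zerovec_def)
  then show False
    using nth_cocirc_index_nonzero[OF assms] nth_mem[OF assms] p_notin_I
    by (auto split: if_splits)
qed

text \<open>Since O' \<setminus> p = O, the support of W off p contains a cocircuit V of O, and then
  V with p-entry \<sigma>(V) is a cocircuit of O' supported inside W.\<close>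

lemma cocircuit_p_entry:
  assumes W: "W \<in> C" "W p \<noteq> 0" and i: "cocirc_index I W < length I"
  shows "W p = W (I ! cocirc_index I W)"
proof -
  obtain V where V: "V \<in> Om" "V p = 0" "\<forall>e. V e \<noteq> 0 \<longrightarrow> W e \<noteq> 0"
    using deletion_cocircuit_below[OF W(1) fun_upd_p_ne_zerovec[OF i]] deletion_p by blast
  let ?V' = "V(p := lex_sigma I V)"
  have "?V' e \<noteq> 0 \<Longrightarrow> W e \<noteq> 0" for e
    using V(3) W(2) by (cases "e = p") auto
  then have "?V' = W \<or> ?V' = neg W"
    by (rule support_subset_imp_eq[OF lex_cocircuit[OF V(1)] W(1)])
  then have "W p = lex_sigma I (W(p := 0))"
  proof
    assume "?V' = W"
    then have "W = ?V'"
      by (rule sym)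
    then show ?thesis
      using V(2) by (simp add: fun_upd_idem)
  next
    assume "?V' = neg W"
    then have "W = neg ?V'"
      by simp
    moreover have "(neg ?V')(p := 0) = neg V"
      using V(2) by (simp add: fun_eq_iff)
    ultimately show ?thesis
      by simp
  qed
  also have "\<dots> = W (I ! cocirc_index I W)"
    using i p_notin_I nth_mem[OF i]
    by (auto simp: lex_sigma_def cocirc_index_fun_upd)
  finally show ?thesis .
qed

lemma cocircuit_lift:
  assumes W: "W \<in> C" "W p = 0" and i: "cocirc_index I W < length I"
  obtains V where "V \<in> C" "V p \<noteq> 0" "\<forall>e. e \<noteq> p \<longrightarrow> W e = 0 \<longrightarrow> V e = 0"
proof -
  obtain V where V: "V \<in> Om" "V p = 0" "\<forall>e. V e \<noteq> 0 \<longrightarrow> W e \<noteq> 0"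
    using deletion_cocircuit_below[OF W(1) fun_upd_p_ne_zerovec[OF i]] deletion_p by blast
  have "lex_sigma I V \<noteq> 0"
  proof
    assume "lex_sigma I V = 0"
    then have "V \<in> C"
      using lex_cocircuit[OF V(1)] V(2) by (simp add: fun_upd_idem)
    then have "V = W \<or> V = neg W"
      using support_subset_imp_eq[OF _ W(1)] V(3) by blast
    moreover have "lex_sigma I W \<noteq> 0"
      using nth_cocirc_index_nonzero[OF i] i by (simp add: lex_sigma_def)
    ultimately show False
      using \<open>lex_sigma I V = 0\<close> by auto
  qed
  moreover have "\<forall>e. e \<noteq> p \<longrightarrow> W e = 0 \<longrightarrow> (V(p := lex_sigma I V)) e = 0"
    using V(3) by auto
  ultimately show thesis
    using that[OF lex_cocircuit[OF V(1)]] by simp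
qed

end

locale lex_comodular_pair =
  lex_extension E Om I p C + comodular_pair "insert p E" C X Y for E Om I p C X Y +
  fixes i :: nat
  assumes i_less: "i < length I"
    and index_X: "cocirc_index I X = i" and index_Y: "cocirc_index I Y = i"
    and X_p: "X p = Y p" "X p \<noteq> 0"
begin

lemma index_element: "I ! i \<in> insert p E" "X (I ! i) = Y (I ! i)" "X (I ! i) \<noteq> 0"
proof -
  show "I ! i \<in> insert p E"
    using set_I nth_mem[OF i_less] by blast
  show X_nz: "X (I ! i) \<noteq> 0"
    using nth_cocirc_index_nonzero[of I X] index_X i_less by simp
  have "Y (I ! i) \<noteq> 0"
    using nth_cocirc_index_nonzero[of I Y] index_Y i_less by simp
  with X_nz show "X (I ! i) = Y (I ! i)"
    by (rule conformal_eq)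
qed

lemma X_p_eq_index_element: "X p = X (I ! i)"
  using cocircuit_p_entry[OF X_cocircuit X_p(2)] index_X i_less by simp

lemma is_elim_index:
  assumes "is_elim g Z" "Z (I ! i) \<noteq> 0"
  shows "cocirc_index I Z = i"
proof (rule cocirc_index_eqI)
  show "i < length I" "Z (I ! i) \<noteq> 0"
    using i_less assms(2) .
  fix j assume "j < i"
  then show "Z (I ! j) = 0"
    using is_elim_zero[OF assms(1)] nth_below_cocirc_index index_X index_Y by metis
qed

lemma is_elim_p_entry:
  assumes "is_elim g Z" "Z (I ! i) \<noteq> 0" "Z p \<noteq> 0"
  shows "Z p = Z (I ! i)"
  using cocircuit_p_entry[OF is_elim_cocircuit[OF assms(1)] assms(3)]
    is_elim_index[OF assms(1,2)] i_less by simp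

lemma is_elim_p_nonzero:
  assumes f: "f \<in> E" "X f \<noteq> 0" and Z: "is_elim p Z" "Z (I ! i) \<noteq> 0"
  shows "Z f \<noteq> 0"
proof
  assume "Z f = 0"
  have "Z p = 0"
    using Z(1) by (rule is_elim_zero_at)
  moreover have "cocirc_index I Z < length I"
    using is_elim_index[OF Z] i_less by simp
  ultimately obtain V where V: "V \<in> C" "V p \<noteq> 0" "\<forall>e. e \<noteq> p \<longrightarrow> Z e = 0 \<longrightarrow> V e = 0"
    using cocircuit_lift[OF is_elim_cocircuit[OF Z(1)]] by blast
  have "p \<notin> insert f (zset (insert p E) (comp X Y))"
    using f(1) p_notin_E X_p(2) by (auto simp: zset_comp_iff)
  then have "\<forall>e\<in>insert f (zset (insert p E) (comp X Y)). V e = 0"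
    using V(3) \<open>Z f = 0\<close> is_elim_vanishes_on_edge[OF Z(1)] by (metis insert_iff)
  moreover have "\<forall>e\<in>insert f (zset (insert p E) (comp X Y)). Z e = 0"
    using \<open>Z f = 0\<close> is_elim_vanishes_on_edge[OF Z(1)] by blast
  ultimately have "V = Z \<or> V = neg Z"
    using cocircuit_through_edge_unique[OF _ _ V(1) _ is_elim_cocircuit[OF Z(1)]] f by blast
  then show False
    using V(2) \<open>Z p = 0\<close> by auto
qed

lemma Dir_outside_sep:
  assumes "\<not> (X f = Y f \<and> X f \<noteq> 0)"
  shows "Dir (insert p E) C (I ! i) f X Y = Dir (insert p E) C p f X Y"
proof -
  obtain Za where Za: "is_elim (I ! i) Za"
    using is_elim_exists[OF index_element] .
  obtain Zp where Zp: "is_elim p Zp"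
    using is_elim_exists X_p by blast
  show ?thesis
    using Dir_eq_is_elim[OF index_element Za] Dir_eq_is_elim[OF _ X_p Zp]
      is_elim_outside_sep[OF Za assms] is_elim_outside_sep[OF Zp assms] by simp
qed

lemma Dir_in_sep:
  assumes f: "f \<in> E" "X f = Y f" "X f \<noteq> 0" and nz: "Dir (insert p E) C (I ! i) f X Y \<noteq> 0"
  shows "Dir (insert p E) C (I ! i) f X Y = Dir (insert p E) C p f X Y
    \<and> Dir (insert p E) C f (I ! i) X Y = Dir (insert p E) C f p X Y"
proof -
  have f': "f \<in> insert p E"
    using f(1) by simp
  obtain Za where Za: "is_elim (I ! i) Za"
    using is_elim_exists[OF index_element] .
  obtain Zp where Zp: "is_elim p Zp"
    using is_elim_exists X_p by blast
  obtain Zf where Zf: "is_elim f Zf"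
    using is_elim_exists[OF f' f(2,3)] .
  note Dir_Za = Dir_eq_is_elim[OF index_element Za]
  note Dir_Zp = Dir_eq_is_elim[OF _ X_p Zp]
  note Dir_Zf = Dir_eq_is_elim[OF f' f(2,3) Zf]
  have "Za f \<noteq> 0"
    using nz Dir_Za by simp
  then have "Zp f = Za f \<and> Zf (I ! i) = Zf p"
    using is_elim_transfer[OF index_element _ X_p f' f(2,3) X_p_eq_index_element Za Zp Zf _
        is_elim_p_entry[OF Zf] is_elim_p_nonzero[OF f(1,3) Zp]]
    by simp
  then show ?thesis
    using Dir_Za Dir_Zp Dir_Zf by simp
qed

end

theorem lemma3p5:
  fixes E :: "'a set" and Om Om' :: "('a \<Rightarrow> int) set" and r :: nat
    and f p :: 'a and I :: "'a list" and X Y :: "'a \<Rightarrow> int" and i :: nat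
  assumes "is_OM E Om" and "om_rank E Om = r"
    and "f \<in> E"
    and "distinct I" and "om_indep E Om (set I)" and "length I \<le> r"
    and "lex_ext E Om I p Om'"
    and "X \<in> Om'" and "Y \<in> Om'" and "conformal (insert p E) X Y"
    and "X p = Y p" and "X p \<noteq> 0"
    and "is_edge (insert p E) Om' (comp X Y)"
    and "i < length I" and "cocirc_index I X = i" and "cocirc_index I Y = i"
    and "f \<noteq> I ! i"
    and "X f \<noteq> Y f \<or> (X f = 0 \<and> Y f = 0) \<or> Dir (insert p E) Om' (I ! i) f X Y \<noteq> 0"
  shows "Dir (insert p E) Om' (I ! i) f X Y = Dir (insert p E) Om' p f X Y
     \<and> (X f = Y f \<and> X f \<noteq> 0 \<longrightarrow> Dir (insert p E) Om' f (I ! i) X Y = Dir (insert p E) Om' f p X Y)"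
proof -
  interpret lex_comodular_pair E Om I p Om' X Y i
  proof unfold_locales
    show "set I \<subseteq> E"
      using assms(5) by (simp add: om_indep_def)
    show "om_rank_of (insert p E) Om' (zset (insert p E) (comp X Y)) + 2 = om_rank (insert p E) Om'"
      using assms(13) by (simp add: is_edge_def)
  qed (use assms(7-12,14-16) lex_ext_is_OM in auto)
  show ?thesis
  proof (cases "X f = Y f \<and> X f \<noteq> 0")
    case True
    then show ?thesis
      using Dir_in_sep[OF assms(3)] assms(18) by simp
  next
    case False
    then show ?thesis
      using Dir_outside_sep[OF False] by blast
  qed
qed

end
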